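(* Let $h_0>0$ and $\beta_1>0$ be such that for all $h\le h_0$, $\sup_{\mathbf{v}\in\mathring{\mathbf{V}}_h\setminus\{0\}}\int_{\Omega_h}(\operatorname{div}\mathbf{v})q\,dx/\|\nabla\mathbf{v}\|_{L^2(\Omega_h)}\ge\beta_1\|q\|_{L^2(\Omega_h)}$ for all $q\in\mathring{Q}_h$, and let $\beta_2>0$ be such that $\sup_{\mathbf{v}\in\mathbf{V}_h\setminus\{0\}}\int_{\partial\Omega_h}(\mathbf{v}\cdot\mathbf{n}_h)\mu\,ds/\|\mathbf{v}\|_{1,h}\ge\beta_2\|\mu\|_{-1/2,h}$ for all $\mu\in\mathring{X}_h$. Then there exists $\beta>0$ depending only on $\beta_1$ and $\beta_2$ such that for all $h\le h_0$, \[ \beta\|(q,\mu)\|\le\sup_{\mathbf{v}\in\mathbf{V}_h\setminus\{0\}}\frac{b_h(\mathbf{v},(q,\mu))}{\|\mathbf{v}\|_{1,h}}\qquad\forall(q,\mu)\in\mathring{Q}_h\times\mathring{X}_h . \]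
   Context: $\Omega\subset\mathbb{R}^2$ bounded with smooth boundary; $S\supset\Omega$ a polygon with quasi-uniform shape-regular triangulation $\mathcal{S}_h$ of mesh size $h$; $\mathcal{T}_h=\{T\in\mathcal{S}_h:\bar T\subset\bar\Omega\}$, $\Omega_h=\operatorname{int}(\bigcup_{T\in\mathcal{T}_h}\bar T)$; $\mathcal{T}_h^{ct}$ its Clough–Tocher refinement; $\mathcal{E}_h^B$ boundary edges, $\mathbf{n}_h$ outward normal of $\partial\Omega_h$, $h_e=\operatorname{diam}e$, $\int_{\partial\Omega_h}q=\sum_{e\in\mathcal{E}_h^B}\int_e q$. Spaces: $\mathbf{V}_h=\{\mathbf{v}\in\mathbf{H}^1(\Omega_h):\mathbf{v}|_K\in\mathcal{P}_2(K)^2\ \forall K\in\mathcal{T}_h^{ct},\ \int_{\partial\Omega_h}\mathbf{v}\cdot\mathbf{n}_h=0\}$, $\mathring{\mathbf{V}}_h=\mathbf{V}_h\cap\mathbf{H}^1_0(\Omega_h)$; $\mathring{Q}_h$ = discontinuous piecewise $\mathcal{P}_1$ functions on $\mathcal{T}_h^{ct}$ with zero mean on $\Omega_h$; $\mathring{X}_h=\{\mu\in C(\partial\Omega_h):\mu|_e\in\mathcal{P}_2(e)\ \forall e,\ \int_{\partial\Omega_h}\mu=0\}$. $b_h(\mathbf{v},(q,\mu))=-\int_{\Omega_h}(\operatorname{div}\mathbf{v})q\,dx+\int_{\partial\Omega_h}(\mathbf{v}\cdot\mathbf{n}_h)\mu\,ds$. Norms: $\|\mathbf{v}\|_{1,h}^2=\|\nabla\mathbf{v}\|_{L^2(\Omega_h)}^2+\sum_e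 h_e^{-1}\|\mathbf{v}\|_{L^2(e)}^2$; $\|\mu\|_{-1/2,h}^2=\sum_e h_e\|\mu\|_{L^2(e)}^2$; $\|(q,\mu)\|=\|q\|_{L^2(\Omega_h)}+\|\mu\|_{-1/2,h}$. (Such $h_0,\beta_1,\beta_2$ independent of $h$ exist.) *)

theory Defs
  imports "HOL-Analysis.Analysis"
begin

type_synonym pt = "real^2"

text \<open>C-infinity functions on the plane (all partial derivatives of all orders exist).\<close>
coinductive smooth2 :: "(pt \<Rightarrow> real) \<Rightarrow> bool" where
  "(\<forall>x. (f has_derivative D x) (at x)) \<Longrightarrow> (\<forall>j. smooth2 (\<lambda>x. D x (axis j 1))) \<Longrightarrow> smooth2 f"

definition smooth_bounded_domain :: "pt set \<Rightarrow> bool" where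
  "smooth_bounded_domain \<Omega> \<longleftrightarrow> bounded \<Omega> \<and> \<Omega> \<noteq> {} \<and>
     (\<exists>\<phi>. smooth2 \<phi> \<and> \<Omega> = {x. \<phi> x < 0} \<and>
          (\<forall>x. \<phi> x = 0 \<longrightarrow> frechet_derivative \<phi> (at x) \<noteq> (\<lambda>_. 0)))"

definition is_tri :: "pt set \<Rightarrow> bool" where
  "is_tri T \<longleftrightarrow> (\<exists>a b c. \<not> collinear {a, b, c} \<and> T = convex hull {a, b, c})"

definition verts :: "pt set \<Rightarrow> pt set" where
  "verts T = {x. x extreme_point_of T}"

definition conforming :: "pt set set \<Rightarrow> bool" where
  "conforming M \<longleftrightarrow> (\<forall>T1\<in>M. \<forall>T2\<in>M. T1 \<noteq> T2 \<longrightarrow> T1 \<inter> T2 = convex hull (verts T1 \<inter> verts T2))"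

definition triangulation_of :: "pt set set \<Rightarrow> pt set \<Rightarrow> bool" where
  "triangulation_of M S \<longleftrightarrow> finite M \<and> M \<noteq> {} \<and> (\<forall>T\<in>M. is_tri T) \<and> conforming M \<and> \<Union>M = S"

definition inradius :: "pt set \<Rightarrow> real" where
  "inradius T = Sup {r. \<exists>c. ball c r \<subseteq> T}"

text \<open>A family of quasi-uniform, shape-regular triangulations Sh h (h in H) of mesh size h
  of a polygon S containing the smooth bounded domain \<Omega>.\<close>
definition admissible_family :: "pt set \<Rightarrow> pt set \<Rightarrow> real set \<Rightarrow> (real \<Rightarrow> pt set set) \<Rightarrow> bool" where
  "admissible_family \<Omega> S H Sh \<longleftrightarrow>
     smooth_bounded_domain \<Omega> \<and> \<Omega> \<subseteq> S \<and>
     (\<forall>h\<in>H. h > 0 \<and> triangulation_of (Sh h) S \<and> h = Max (diameter ` Sh h)) \<and>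
     (\<exists>\<sigma>>0. \<forall>h\<in>H. \<forall>T\<in>Sh h. diameter T \<le> \<sigma> * inradius T) \<and>
     (\<exists>c>0. \<forall>h\<in>H. \<forall>T\<in>Sh h. c * h \<le> diameter T)"

definition Th :: "pt set \<Rightarrow> pt set set \<Rightarrow> pt set set" where
  "Th \<Omega> M = {T\<in>M. T \<subseteq> closure \<Omega>}"

definition Omh :: "pt set \<Rightarrow> pt set set \<Rightarrow> pt set" where
  "Omh \<Omega> M = interior (\<Union>(Th \<Omega> M))"

definition ct_sub :: "pt set \<Rightarrow> pt set \<Rightarrow> bool" where
  "ct_sub T K \<longleftrightarrow> (\<exists>a b c. \<not> collinear {a, b, c} \<and> T = convex hull {a, b, c} \<and>
                      K = convex hull {a, b, (1/3) *\<^sub>R (a + b + c)})"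

definition CT :: "pt set \<Rightarrow> pt set set \<Rightarrow> pt set set" where
  "CT \<Omega> M = {K. \<exists>T\<in>Th \<Omega> M. ct_sub T K}"

definition EB :: "pt set \<Rightarrow> pt set set \<Rightarrow> pt set set" where
  "EB \<Omega> M = {e. \<exists>T\<in>Th \<Omega> M. \<exists>a b c. \<not> collinear {a, b, c} \<and> T = convex hull {a, b, c} \<and>
                  e = closed_segment a b \<and> e \<subseteq> frontier (Omh \<Omega> M)}"

text \<open>Line integral over a straight edge (independent of the orientation chosen).\<close>
definition eint :: "pt set \<Rightarrow> (pt \<Rightarrow> real) \<Rightarrow> real" where
  "eint e f = (SOME I. \<exists>a b. a \<noteq> b \<and> e = closed_segment a b \<and>
                  I = dist a b * integral {0..1} (\<lambda>t. f (a + t *\<^sub>R (b - a))))"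

definition nrm :: "pt set \<Rightarrow> pt set set \<Rightarrow> pt set \<Rightarrow> pt" where
  "nrm \<Omega> M e = (SOME n. norm n = 1 \<and> (\<forall>x\<in>e. \<forall>y\<in>e. n \<bullet> (x - y) = 0) \<and>
                   (\<exists>T\<in>Th \<Omega> M. e \<subseteq> T \<and> (\<forall>x\<in>e. \<forall>y\<in>T. n \<bullet> (y - x) \<le> 0)))"

text \<open>Trace on the boundary edge e of a piecewise polynomial function: limit from the
  interior of the refined element containing e.\<close>
definition tr :: "pt set \<Rightarrow> pt set set \<Rightarrow> (pt \<Rightarrow> pt) \<Rightarrow> pt set \<Rightarrow> pt \<Rightarrow> pt" where
  "tr \<Omega> M v e x = Lim (at x within \<Union>{interior K | K. K \<in> CT \<Omega> M \<and> e \<subseteq> K}) v"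

definition P2vec :: "(pt \<Rightarrow> pt) \<Rightarrow> bool" where
  "P2vec p \<longleftrightarrow> (\<exists>c0 c1 c2 c3 c4 c5 :: pt. \<forall>x. p x = c0 + (x$1) *\<^sub>R c1 + (x$2) *\<^sub>R c2
        + ((x$1)^2) *\<^sub>R c3 + (x$1 * x$2) *\<^sub>R c4 + ((x$2)^2) *\<^sub>R c5)"

definition P1 :: "(pt \<Rightarrow> real) \<Rightarrow> bool" where
  "P1 p \<longleftrightarrow> (\<exists>a b c :: real. \<forall>x. p x = a + b * x$1 + c * x$2)"

definition Vh :: "pt set \<Rightarrow> pt set set \<Rightarrow> (pt \<Rightarrow> pt) set" where
  "Vh \<Omega> M = {v. continuous_on (Omh \<Omega> M) v \<and>
               (\<forall>K\<in>CT \<Omega> M. \<exists>p. P2vec p \<and> (\<forall>x\<in>interior K. v x = p x)) \<and>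
               (\<forall>x. x \<notin> Omh \<Omega> M \<longrightarrow> v x = 0) \<and>
               (\<Sum>e\<in>EB \<Omega> M. eint e (\<lambda>x. tr \<Omega> M v e x \<bullet> nrm \<Omega> M e)) = 0}"

definition V0h :: "pt set \<Rightarrow> pt set set \<Rightarrow> (pt \<Rightarrow> pt) set" where
  "V0h \<Omega> M = {v\<in>Vh \<Omega> M. \<forall>e\<in>EB \<Omega> M. \<forall>x\<in>e. tr \<Omega> M v e x = 0}"

definition Q0h :: "pt set \<Rightarrow> pt set set \<Rightarrow> (pt \<Rightarrow> real) set" where
  "Q0h \<Omega> M = {q. (\<forall>K\<in>CT \<Omega> M. \<exists>p. P1 p \<and> (\<forall>x\<in>interior K. q x = p x)) \<and>
                  integral (Omh \<Omega> M) q = 0}"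

definition X0h :: "pt set \<Rightarrow> pt set set \<Rightarrow> (pt \<Rightarrow> real) set" where
  "X0h \<Omega> M = {\<mu>. continuous_on (frontier (Omh \<Omega> M)) \<mu> \<and>
                  (\<forall>e\<in>EB \<Omega> M. \<forall>a b. e = closed_segment a b \<longrightarrow>
                     (\<exists>c0 c1 c2. \<forall>t\<in>{0..1}. \<mu> (a + t *\<^sub>R (b - a)) = c0 + c1 * t + c2 * t^2)) \<and>
                  (\<Sum>e\<in>EB \<Omega> M. eint e \<mu>) = 0}"

definition pdiff :: "(pt \<Rightarrow> pt) \<Rightarrow> pt \<Rightarrow> 2 \<Rightarrow> pt" where
  "pdiff v x j = frechet_derivative v (at x) (axis j 1)"

definition divg :: "(pt \<Rightarrow> pt) \<Rightarrow> pt \<Rightarrow> real" where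
  "divg v x = pdiff v x 1 $ 1 + pdiff v x 2 $ 2"

definition grad_sq :: "(pt \<Rightarrow> pt) \<Rightarrow> pt \<Rightarrow> real" where
  "grad_sq v x = (\<Sum>j\<in>UNIV. (norm (pdiff v x j))^2)"

definition gradL2 :: "pt set \<Rightarrow> pt set set \<Rightarrow> (pt \<Rightarrow> pt) \<Rightarrow> real" where
  "gradL2 \<Omega> M v = sqrt (integral (Omh \<Omega> M) (grad_sq v))"

definition norm1h :: "pt set \<Rightarrow> pt set set \<Rightarrow> (pt \<Rightarrow> pt) \<Rightarrow> real" where
  "norm1h \<Omega> M v = sqrt ((gradL2 \<Omega> M v)^2 +
      (\<Sum>e\<in>EB \<Omega> M. (1 / diameter e) * eint e (\<lambda>x. (norm (tr \<Omega> M v e x))^2)))"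

definition L2n :: "pt set \<Rightarrow> pt set set \<Rightarrow> (pt \<Rightarrow> real) \<Rightarrow> real" where
  "L2n \<Omega> M q = sqrt (integral (Omh \<Omega> M) (\<lambda>x. (q x)^2))"

definition mnorm :: "pt set \<Rightarrow> pt set set \<Rightarrow> (pt \<Rightarrow> real) \<Rightarrow> real" where
  "mnorm \<Omega> M \<mu> = sqrt (\<Sum>e\<in>EB \<Omega> M. diameter e * eint e (\<lambda>x. (\<mu> x)^2))"

definition bnd_pair :: "pt set \<Rightarrow> pt set set \<Rightarrow> (pt \<Rightarrow> pt) \<Rightarrow> (pt \<Rightarrow> real) \<Rightarrow> real" where
  "bnd_pair \<Omega> M v \<mu> = (\<Sum>e\<in>EB \<Omega> M. eint e (\<lambda>x. (tr \<Omega> M v e x \<bullet> nrm \<Omega> M e) * \<mu> x))"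

definition bh :: "pt set \<Rightarrow> pt set set \<Rightarrow> (pt \<Rightarrow> pt) \<Rightarrow> (pt \<Rightarrow> real) \<Rightarrow> (pt \<Rightarrow> real) \<Rightarrow> real" where
  "bh \<Omega> M v q \<mu> = - integral (Omh \<Omega> M) (\<lambda>x. divg v x * q x) + bnd_pair \<Omega> M v \<mu>"

definition infsup1 :: "pt set \<Rightarrow> pt set set \<Rightarrow> real \<Rightarrow> bool" where
  "infsup1 \<Omega> M \<beta>1 \<longleftrightarrow> (\<forall>q\<in>Q0h \<Omega> M. ereal (\<beta>1 * L2n \<Omega> M q) \<le>
      (SUP v\<in>V0h \<Omega> M - {\<lambda>_. 0}. ereal (integral (Omh \<Omega> M) (\<lambda>x. divg v x * q x) / gradL2 \<Omega> M v)))"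

definition infsup2 :: "pt set \<Rightarrow> pt set set \<Rightarrow> real \<Rightarrow> bool" where
  "infsup2 \<Omega> M \<beta>2 \<longleftrightarrow> (\<forall>\<mu>\<in>X0h \<Omega> M. ereal (\<beta>2 * mnorm \<Omega> M \<mu>) \<le>
      (SUP v\<in>Vh \<Omega> M - {\<lambda>_. 0}. ereal (bnd_pair \<Omega> M v \<mu> / norm1h \<Omega> M v)))"

definition infsup_bh :: "pt set \<Rightarrow> pt set set \<Rightarrow> real \<Rightarrow> bool" where
  "infsup_bh \<Omega> M \<beta> \<longleftrightarrow> (\<forall>q\<in>Q0h \<Omega> M. \<forall>\<mu>\<in>X0h \<Omega> M.
      ereal (\<beta> * (L2n \<Omega> M q + mnorm \<Omega> M \<mu>)) \<le>
      (SUP v\<in>Vh \<Omega> M - {\<lambda>_. 0}. ereal (bh \<Omega> M v q \<mu> / norm1h \<Omega> M v)))"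

end

theory Submission
  imports Defs
begin

text \<open>Let \<open>S\<close> be the supremum of \<open>b\<^sub>h(v, (q, \<mu>)) / \<parallel>v\<parallel>\<^sub>1\<^sub>,\<^sub>h\<close> over \<open>V\<^sub>h\<close>.
  Velocities with vanishing trace only see the divergence part of \<open>b\<^sub>h\<close>, and for them
  \<open>\<parallel>v\<parallel>\<^sub>1\<^sub>,\<^sub>h = \<parallel>\<nabla>v\<parallel>\<close>; the first inf-sup condition applied to \<open>-q\<close> gives
  \<open>\<beta>\<^sub>1 \<parallel>q\<parallel> \<le> S\<close>. For general \<open>v\<close> the boundary pairing differs from \<open>b\<^sub>h\<close> by
  the divergence term, which Cauchy--Schwarz and \<open>(div v)\<^sup>2 \<le> 2 \<bar>\<nabla>v\<bar>\<^sup>2\<close> bound by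
  \<open>sqrt 2 \<parallel>q\<parallel> \<parallel>v\<parallel>\<^sub>1\<^sub>,\<^sub>h\<close>, so the second condition gives
  \<open>\<beta>\<^sub>2 \<parallel>\<mu>\<parallel> \<le> S + sqrt 2 \<parallel>q\<parallel>\<close>. A convex combination of the two bounds gives
  \<open>\<beta> = min (\<beta>\<^sub>1 / 2) (\<beta>\<^sub>1 \<beta>\<^sub>2 / (2 (\<beta>\<^sub>1 + sqrt 2)))\<close>. Cauchy--Schwarz needs the
  integrands to be integrable; they are, being continuous on each Clough--Tocher subtriangle.\<close>

section \<open>Integrals of piecewise continuous functions\<close>

lemma integral_nonneg_unconditional:
  fixes f :: "'n::euclidean_space \<Rightarrow> real"
  assumes "\<And>x. x \<in> S \<Longrightarrow> 0 \<le> f x"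
  shows "0 \<le> integral S f"
  using assms
  by (cases "f integrable_on S") (auto intro: integral_nonneg simp: not_integrable_integral)

lemma nonneg_quadratic_imp_square_le:
  fixes A B C :: real
  assumes "0 \<le> A" and quad: "\<And>t. 0 \<le> t^2 * A - 2 * t * B + C"
  shows "B^2 \<le> A * C"
proof (cases "A = 0")
  case True
  have "B = 0"
  proof (rule ccontr)
    assume "B \<noteq> 0"
    have "0 \<le> ((C + 1) / (2 * B))^2 * A - 2 * ((C + 1) / (2 * B)) * B + C" by (rule quad)
    then show False using True \<open>B \<noteq> 0\<close> by (simp add: field_simps)
  qed
  then show ?thesis using True by simp
next
  case False
  with \<open>0 \<le> A\<close> have "0 < A" by simp
  have "0 \<le> (B / A)^2 * A - 2 * (B / A) * B + C" by (rule quad)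
  also have "\<dots> = C - B^2 / A" using \<open>0 < A\<close> by (simp add: field_simps power2_eq_square)
  finally show ?thesis using \<open>0 < A\<close> by (simp add: field_simps mult.commute)
qed

lemma integral_Cauchy_Schwarz:
  fixes f g :: "'n::euclidean_space \<Rightarrow> real"
  assumes ff: "(\<lambda>x. (f x)^2) integrable_on S" and gg: "(\<lambda>x. (g x)^2) integrable_on S"
    and fg: "(\<lambda>x. f x * g x) integrable_on S"
  shows "\<bar>integral S (\<lambda>x. f x * g x)\<bar>
           \<le> sqrt (integral S (\<lambda>x. (f x)^2)) * sqrt (integral S (\<lambda>x. (g x)^2))"
proof -
  have "(integral S (\<lambda>x. f x * g x))^2 \<le> integral S (\<lambda>x. (f x)^2) * integral S (\<lambda>x. (g x)^2)"
  proof (rule nonneg_quadratic_imp_square_le)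
    show "0 \<le> integral S (\<lambda>x. (f x)^2)" by (rule integral_nonneg_unconditional) simp
    fix t :: real
    have "(\<lambda>x. (t * f x - g x)^2) = (\<lambda>x. t^2 * (f x)^2 - (2 * t) * (f x * g x) + (g x)^2)"
      by (simp add: fun_eq_iff power2_eq_square algebra_simps)
    then have "integral S (\<lambda>x. (t * f x - g x)^2) = t^2 * integral S (\<lambda>x. (f x)^2)
                 - 2 * t * integral S (\<lambda>x. f x * g x) + integral S (\<lambda>x. (g x)^2)"
      using integrable_on_cmult_left[OF ff, of "t^2"] integrable_on_cmult_left[OF fg, of "2 * t"] gg
      by (simp add: integral_add integral_diff integrable_diff)
    moreover have "0 \<le> integral S (\<lambda>x. (t * f x - g x)^2)"
      by (rule integral_nonneg_unconditional) simp
    ultimately show "0 \<le> t^2 * integral S (\<lambda>x. (f x)^2)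
                 - 2 * t * integral S (\<lambda>x. f x * g x) + integral S (\<lambda>x. (g x)^2)" by simp
  qed
  then have "sqrt ((integral S (\<lambda>x. f x * g x))^2)
               \<le> sqrt (integral S (\<lambda>x. (f x)^2) * integral S (\<lambda>x. (g x)^2))"
    by (rule real_sqrt_le_mono)
  then show ?thesis by (simp add: real_sqrt_mult)
qed

lemma continuous_bounded_integrable_on:
  fixes f :: "'n::euclidean_space \<Rightarrow> real"
  assumes "S \<in> sets lebesgue" and "bounded S" and "continuous_on S f"
    and "\<And>x. x \<in> S \<Longrightarrow> norm (f x) \<le> B"
  shows "f integrable_on S"
proof (rule measurable_bounded_by_integrable_imp_integrable)
  show "f \<in> borel_measurable (lebesgue_on S)"
    using assms(3,1) by (rule continuous_imp_measurable_on_sets_lebesgue)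
  show "(\<lambda>x. B) integrable_on S"
    using assms(1,2) by (intro integrable_on_const bounded_set_imp_lmeasurable)
qed (use assms in auto)

lemma negligible_Union_diff_interior:
  fixes F :: "'n::euclidean_space set set"
  assumes "finite F" and cc: "\<And>K. K \<in> F \<Longrightarrow> convex K \<and> compact K"
  shows "negligible (\<Union>F - \<Union>(interior ` F))"
proof (rule negligible_subset)
  show "negligible (\<Union>(frontier ` F))"
    using assms by (auto intro!: negligible_Union negligible_convex_frontier)
  show "\<Union>F - \<Union>(interior ` F) \<subseteq> \<Union>(frontier ` F)"
  proof
    fix x assume x: "x \<in> \<Union>F - \<Union>(interior ` F)"
    then obtain K where K: "K \<in> F" "x \<in> K" by blast
    moreover have "x \<notin> interior K" using x K(1) by blast
    moreover have "closure K = K" using cc[OF K(1)] by (simp add: compact_imp_closed)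
    ultimately show "x \<in> \<Union>(frontier ` F)" unfolding frontier_def by blast
  qed
qed

lemma piecewise_continuous_integrable_on:
  fixes f :: "'n::euclidean_space \<Rightarrow> real"
  assumes "finite F" and cc: "\<And>K. K \<in> F \<Longrightarrow> convex K \<and> compact K"
    and "S \<subseteq> \<Union>F" and "\<And>K. K \<in> F \<Longrightarrow> interior K \<subseteq> S"
    and pieces: "\<And>K. K \<in> F \<Longrightarrow> \<exists>g. continuous_on K g \<and> (\<forall>x\<in>interior K. f x = g x)"
  shows "f integrable_on S"
proof -
  obtain G where G: "\<And>K. K \<in> F \<Longrightarrow> continuous_on K (G K) \<and> (\<forall>x\<in>interior K. f x = G K x)"
    using pieces by metis
  define U where "U = \<Union>(interior ` F)"
  have cont: "continuous_on U f" unfolding U_def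
  proof (rule continuous_on_open_Union)
    fix s assume "s \<in> interior ` F"
    then obtain K where K: "K \<in> F" "s = interior K" by auto
    have "continuous_on (interior K) (G K)" using G[OF K(1)] interior_subset continuous_on_subset by blast
    then show "continuous_on s f" using G[OF K(1)] K(2) by (metis continuous_on_eq)
  qed auto
  have "bounded (\<Union>K\<in>F. G K ` K)"
    using \<open>finite F\<close> cc G
    by (intro compact_imp_bounded compact_Union) (auto intro: compact_continuous_image)
  then obtain B where B: "\<And>y. y \<in> (\<Union>K\<in>F. G K ` K) \<Longrightarrow> norm y \<le> B"
    unfolding bounded_iff by blast
  have fB: "norm (f x) \<le> B" if "x \<in> U" for x
  proof -
    obtain K where K: "K \<in> F" "x \<in> interior K" using \<open>x \<in> U\<close> unfolding U_def by blast
    then have "f x = G K x" "x \<in> K" using G interior_subset by auto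
    then show ?thesis using B K(1) by blast
  qed
  have "bounded (\<Union>F)" using \<open>finite F\<close> cc by (auto intro: compact_imp_bounded)
  moreover have "U \<subseteq> \<Union>F" unfolding U_def using interior_subset by blast
  ultimately have "bounded U" by (rule bounded_subset)
  moreover have "open U" unfolding U_def by auto
  then have "U \<in> sets lebesgue" by simp
  ultimately have fU: "f integrable_on U" using cont fB by (intro continuous_bounded_integrable_on)
  have "negligible (\<Union>F - U)"
    unfolding U_def using \<open>finite F\<close> cc by (rule negligible_Union_diff_interior)
  then have "negligible (S - U)"
    by (rule negligible_subset) (use \<open>S \<subseteq> \<Union>F\<close> in blast)
  moreover have "U \<subseteq> S" unfolding U_def using assms(4) by blast
  ultimately show ?thesis
    by (intro integrable_spike_set[OF fU]) (auto intro: negligible_subset)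
qed

section \<open>Clough--Tocher subtriangles\<close>

lemma centroid_in_convex_hull_3:
  fixes a b c :: "'a::real_vector"
  shows "(1/3) *\<^sub>R (a + b + c) \<in> convex hull {a, b, c}"
proof -
  have "(1/3) *\<^sub>R (a + b + c) = (1/3) *\<^sub>R a + (1/3) *\<^sub>R b + (1/3) *\<^sub>R c"
    by (simp add: algebra_simps)
  then show ?thesis unfolding convex_hull_3 by fastforce
qed

lemma convex_hull_3_centroid_piece:
  fixes a b c :: "'a::real_vector"
  assumes "0 \<le> w" "w \<le> u" "w \<le> v" "u + v + w = 1"
  shows "u *\<^sub>R a + v *\<^sub>R b + w *\<^sub>R c \<in> convex hull {a, b, (1/3) *\<^sub>R (a + b + c)}"
proof -
  have "u *\<^sub>R a + v *\<^sub>R b + w *\<^sub>R c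
          = (u - w) *\<^sub>R a + (v - w) *\<^sub>R b + (3 * w) *\<^sub>R ((1/3) *\<^sub>R (a + b + c))"
    by (simp add: algebra_simps)
  then show ?thesis
    unfolding convex_hull_3 using assms
    by (intro CollectI exI[of _ "u - w"] exI[of _ "v - w"] exI[of _ "3 * w"]) auto
qed

lemma convex_hull_3_centroid_cover:
  fixes a b c :: "'a::real_vector"
  defines "g \<equiv> (1/3) *\<^sub>R (a + b + c)"
  shows "convex hull {a, b, c}
           \<subseteq> convex hull {a, b, g} \<union> convex hull {b, c, g} \<union> convex hull {c, a, g}"
proof
  fix x assume "x \<in> convex hull {a, b, c}"
  then obtain u v w where uvw: "0 \<le> u" "0 \<le> v" "0 \<le> w" "u + v + w = 1"
    "x = u *\<^sub>R a + v *\<^sub>R b + w *\<^sub>R c"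
    by (auto simp: convex_hull_3)
  have g: "(1/3) *\<^sub>R (b + c + a) = g" "(1/3) *\<^sub>R (c + a + b) = g"
    by (simp_all add: g_def add_ac)
  consider "w \<le> u" "w \<le> v" | "u \<le> v" "u \<le> w" | "v \<le> u" "v \<le> w" by linarith
  then show "x \<in> convex hull {a, b, g} \<union> convex hull {b, c, g} \<union> convex hull {c, a, g}"
  proof cases
    case 1
    then show ?thesis using convex_hull_3_centroid_piece[of w u v a b c] uvw g_def by simp
  next
    case 2
    then show ?thesis using convex_hull_3_centroid_piece[of u v w b c a] uvw g
      by (simp add: algebra_simps)
  next
    case 3
    then show ?thesis using convex_hull_3_centroid_piece[of v w u c a b] uvw g
      by (simp add: algebra_simps)
  qed
qed

lemma ct_sub_subset:
  assumes "ct_sub T K"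
  shows "K \<subseteq> T"
proof -
  obtain a b c where "T = convex hull {a, b, c}" "K = convex hull {a, b, (1/3) *\<^sub>R (a + b + c)}"
    using assms unfolding ct_sub_def by blast
  then show ?thesis
    using centroid_in_convex_hull_3[of a b c]
    by (metis convex_convex_hull empty_subsetI hull_inc hull_minimal insertI1 insert_subset subset_insertI)
qed

lemma ct_sub_convex_compact: "ct_sub T K \<Longrightarrow> convex K \<and> compact K"
  unfolding ct_sub_def by (auto intro: compact_convex_hull finite_imp_compact)

lemma is_tri_ct_sub_cover:
  assumes "is_tri T"
  shows "\<exists>F. finite F \<and> (\<forall>K\<in>F. ct_sub T K) \<and> T \<subseteq> \<Union>F"
proof -
  obtain a b c where abc: "\<not> collinear {a, b, c}" "T = convex hull {a, b, c}"
    using assms unfolding is_tri_def by blast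
  define g where "g = (1/3) *\<^sub>R (a + b + c)"
  have rot: "{b, c, a} = {a, b, c}" "{c, a, b} = {a, b, c}"
    "(1/3) *\<^sub>R (b + c + a) = g" "(1/3) *\<^sub>R (c + a + b) = g"
    by (auto simp: g_def add_ac)
  define F where "F = {convex hull {a, b, g}, convex hull {b, c, g}, convex hull {c, a, g}}"
  have "finite F" unfolding F_def by simp
  moreover have "\<forall>K\<in>F. ct_sub T K"
  proof
    fix K assume "K \<in> F"
    have "ct_sub T (convex hull {x, y, (1/3) *\<^sub>R (x + y + z)})"
      if "{x, y, z} = {a, b, c}" for x y z
      unfolding ct_sub_def using abc
      by (intro exI[of _ x] exI[of _ y] exI[of _ z]) (simp add: that)
    from this[of a b c] this[of b c a] this[of c a b] show "ct_sub T K"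
      using \<open>K \<in> F\<close> rot unfolding F_def g_def by auto
  qed
  moreover have "T \<subseteq> \<Union>F"
    using convex_hull_3_centroid_cover[of a b c] abc(2) unfolding F_def g_def by auto
  ultimately show ?thesis by (intro exI[of _ F] conjI)
qed

definition CT_piecewise_continuous :: "pt set \<Rightarrow> pt set set \<Rightarrow> (pt \<Rightarrow> real) \<Rightarrow> bool" where
  "CT_piecewise_continuous \<Omega> M f \<longleftrightarrow>
     (\<forall>K\<in>CT \<Omega> M. \<exists>g. continuous_on K g \<and> (\<forall>x\<in>interior K. f x = g x))"

lemma CT_piecewise_continuous_integrable_on:
  assumes "finite M" and tri: "\<forall>T\<in>M. is_tri T" and f: "CT_piecewise_continuous \<Omega> M f"
  shows "f integrable_on Omh \<Omega> M"
proof -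
  have "\<forall>T\<in>Th \<Omega> M. \<exists>F. finite F \<and> (\<forall>K\<in>F. ct_sub T K) \<and> T \<subseteq> \<Union>F"
    using tri is_tri_ct_sub_cover unfolding Th_def by blast
  then obtain FT where FT: "\<forall>T\<in>Th \<Omega> M. finite (FT T) \<and> (\<forall>K\<in>FT T. ct_sub T K) \<and> T \<subseteq> \<Union>(FT T)"
    by (rule bchoice[THEN exE])
  define F where "F = \<Union>(FT ` Th \<Omega> M)"
  have KT: "\<exists>T\<in>Th \<Omega> M. ct_sub T K" if "K \<in> F" for K
    using that FT unfolding F_def by blast
  have "Th \<Omega> M \<subseteq> M" unfolding Th_def by blast
  then have "finite (Th \<Omega> M)" using \<open>finite M\<close> by (rule finite_subset)
  then have "finite F" unfolding F_def using FT by simp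
  moreover have "convex K \<and> compact K" if "K \<in> F" for K
    using KT[OF that] ct_sub_convex_compact by blast
  moreover have "Omh \<Omega> M \<subseteq> \<Union>F"
  proof -
    have "T \<subseteq> \<Union>F" if "T \<in> Th \<Omega> M" for T
    proof -
      have "T \<subseteq> \<Union>(FT T)" using FT that by simp
      also have "\<dots> \<subseteq> \<Union>F" unfolding F_def using that by (intro Union_mono) auto
      finally show ?thesis .
    qed
    then have "\<Union>(Th \<Omega> M) \<subseteq> \<Union>F" by (rule Union_least)
    then show ?thesis unfolding Omh_def using interior_subset by (rule subset_trans[rotated])
  qed
  moreover have "interior K \<subseteq> Omh \<Omega> M" if "K \<in> F" for K
  proof -
    obtain T where "T \<in> Th \<Omega> M" "ct_sub T K" using KT[OF \<open>K \<in> F\<close>] by blast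
    then have "K \<subseteq> \<Union>(Th \<Omega> M)" using ct_sub_subset by blast
    then show ?thesis unfolding Omh_def by (rule interior_mono)
  qed
  moreover have "\<exists>g. continuous_on K g \<and> (\<forall>x\<in>interior K. f x = g x)" if "K \<in> F" for K
  proof -
    have "K \<in> CT \<Omega> M" using KT[OF that] unfolding CT_def by blast
    then show ?thesis using f unfolding CT_piecewise_continuous_def by blast
  qed
  ultimately show ?thesis by (rule piecewise_continuous_integrable_on)
qed

lemma CT_piecewise_continuous_mult:
  assumes "CT_piecewise_continuous \<Omega> M f" and "CT_piecewise_continuous \<Omega> M g"
  shows "CT_piecewise_continuous \<Omega> M (\<lambda>x. f x * g x)"
  unfolding CT_piecewise_continuous_def
proof
  fix K assume "K \<in> CT \<Omega> M"
  obtain f' where "continuous_on K f'" "\<forall>x\<in>interior K. f x = f' x"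
    using assms(1) \<open>K \<in> CT \<Omega> M\<close> unfolding CT_piecewise_continuous_def by blast
  moreover obtain g' where "continuous_on K g'" "\<forall>x\<in>interior K. g x = g' x"
    using assms(2) \<open>K \<in> CT \<Omega> M\<close> unfolding CT_piecewise_continuous_def by blast
  ultimately show "\<exists>h. continuous_on K h \<and> (\<forall>x\<in>interior K. f x * g x = h x)"
    by (intro exI[of _ "\<lambda>x. f' x * g' x"]) (auto intro: continuous_intros)
qed

lemma Q0h_CT_piecewise_continuous:
  assumes "q \<in> Q0h \<Omega> M"
  shows "CT_piecewise_continuous \<Omega> M q"
  unfolding CT_piecewise_continuous_def
proof
  fix K assume "K \<in> CT \<Omega> M"
  then obtain p where p: "P1 p" "\<forall>x\<in>interior K. q x = p x"
    using assms unfolding Q0h_def by blast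
  then obtain a b c where "p = (\<lambda>x. a + b * x$1 + c * x$2)" unfolding P1_def by blast
  then have "continuous_on K p" by (auto intro!: continuous_intros)
  then show "\<exists>g. continuous_on K g \<and> (\<forall>x\<in>interior K. q x = g x)" using p(2) by blast
qed

lemma P2vec_has_derivative:
  assumes "P2vec p"
  obtains D where "\<And>x. (p has_derivative D x) (at x)" and "\<And>y. continuous_on UNIV (\<lambda>x. D x y)"
proof -
  obtain c0 c1 c2 c3 c4 c5 :: pt where p: "p = (\<lambda>x. c0 + (x$1) *\<^sub>R c1 + (x$2) *\<^sub>R c2
        + ((x$1)^2) *\<^sub>R c3 + (x$1 * x$2) *\<^sub>R c4 + ((x$2)^2) *\<^sub>R c5)"
    using assms unfolding P2vec_def by blast
  define D where "D = (\<lambda>(x::pt) (y::pt). y$1 *\<^sub>R c1 + y$2 *\<^sub>R c2 + (2 * x$1 * y$1) *\<^sub>R c3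
        + (y$1 * x$2 + x$1 * y$2) *\<^sub>R c4 + (2 * x$2 * y$2) *\<^sub>R c5)"
  have "(p has_derivative D x) (at x)" for x
    unfolding p D_def
    by (auto intro!: derivative_eq_intros bounded_linear_imp_has_derivative simp: algebra_simps)
  moreover have "continuous_on UNIV (\<lambda>x. D x y)" for y
    unfolding D_def by (auto intro!: continuous_intros)
  ultimately show ?thesis using that by blast
qed

lemma Vh_pdiff_piecewise_continuous:
  assumes "v \<in> Vh \<Omega> M" and "K \<in> CT \<Omega> M"
  obtains D where "\<And>j. continuous_on UNIV (\<lambda>x. D x j)"
    and "\<And>x j. x \<in> interior K \<Longrightarrow> pdiff v x j = D x j"
proof -
  obtain p where p: "P2vec p" "\<forall>x\<in>interior K. v x = p x"
    using assms unfolding Vh_def by blast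
  obtain D where D: "\<And>x. (p has_derivative D x) (at x)" "\<And>y. continuous_on UNIV (\<lambda>x. D x y)"
    using P2vec_has_derivative[OF p(1)] by blast
  have "pdiff v x j = D x (axis j 1)" if x: "x \<in> interior K" for x j
  proof -
    have "(v has_derivative D x) (at x)"
      by (rule has_derivative_transform_within_open[OF D(1) open_interior x]) (use p(2) in auto)
    then show ?thesis unfolding pdiff_def by (metis frechet_derivative_at)
  qed
  then show ?thesis using that[of "\<lambda>x j. D x (axis j 1)"] D(2) by blast
qed

lemma Vh_divg_CT_piecewise_continuous:
  assumes "v \<in> Vh \<Omega> M"
  shows "CT_piecewise_continuous \<Omega> M (divg v)"
  unfolding CT_piecewise_continuous_def
proof
  fix K assume "K \<in> CT \<Omega> M"
  then obtain D where "\<And>j. continuous_on UNIV (\<lambda>x. D x j)"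
    and "\<And>x j. x \<in> interior K \<Longrightarrow> pdiff v x j = D x j"
    using Vh_pdiff_piecewise_continuous[OF assms] by metis
  then show "\<exists>g. continuous_on K g \<and> (\<forall>x\<in>interior K. divg v x = g x)"
    unfolding divg_def
    by (intro exI[of _ "\<lambda>x. D x 1 $ 1 + D x 2 $ 2"])
      (auto intro!: continuous_intros intro: continuous_on_subset)
qed

lemma Vh_grad_sq_CT_piecewise_continuous:
  assumes "v \<in> Vh \<Omega> M"
  shows "CT_piecewise_continuous \<Omega> M (grad_sq v)"
  unfolding CT_piecewise_continuous_def
proof
  fix K assume "K \<in> CT \<Omega> M"
  then obtain D where "\<And>j. continuous_on UNIV (\<lambda>x. D x j)"
    and "\<And>x j. x \<in> interior K \<Longrightarrow> pdiff v x j = D x j"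
    using Vh_pdiff_piecewise_continuous[OF assms] by metis
  then show "\<exists>g. continuous_on K g \<and> (\<forall>x\<in>interior K. grad_sq v x = g x)"
    unfolding grad_sq_def
    by (intro exI[of _ "\<lambda>x. \<Sum>j\<in>UNIV. (norm (D x j))^2"])
      (auto intro!: continuous_intros intro: continuous_on_subset)
qed

lemma EB_closed_segment:
  assumes "e \<in> EB \<Omega> M"
  obtains a b where "a \<noteq> b" "e = closed_segment a b"
proof -
  obtain a b c where "\<not> collinear {a, b, c}" "e = closed_segment a b"
    using assms unfolding EB_def by blast
  moreover from this(1) have "a \<noteq> b" by (metis collinear_2 insert_absorb2)
  ultimately show ?thesis using that by blast
qed

lemma eint_eq_integral_segment:
  assumes "e \<in> EB \<Omega> M"
  obtains a b where "\<And>t. t \<in> {0..1} \<Longrightarrow> a + t *\<^sub>R (b - a) \<in> e"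
    and "eint e f = dist a b * integral {0..1} (\<lambda>t. f (a + t *\<^sub>R (b - a)))"
proof -
  let ?P = "\<lambda>I. \<exists>a b. a \<noteq> b \<and> e = closed_segment a b \<and>
                  I = dist a b * integral {0..1} (\<lambda>t. f (a + t *\<^sub>R (b - a)))"
  have "\<exists>I. ?P I" using EB_closed_segment[OF assms] by blast
  then have "?P (eint e f)" unfolding eint_def by (rule someI_ex)
  then obtain a b where ab: "e = closed_segment a b"
    "eint e f = dist a b * integral {0..1} (\<lambda>t. f (a + t *\<^sub>R (b - a)))"
    by blast
  have "a + t *\<^sub>R (b - a) \<in> e" if "t \<in> {0..1}" for t
  proof -
    have "a + t *\<^sub>R (b - a) = (1 - t) *\<^sub>R a + t *\<^sub>R b" by (simp add: algebra_simps)
    then show ?thesis using that unfolding ab(1) in_segment by auto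
  qed
  then show ?thesis using that ab(2) by blast
qed

lemma eint_eq_0:
  assumes "e \<in> EB \<Omega> M" and "\<And>x. x \<in> e \<Longrightarrow> f x = 0"
  shows "eint e f = 0"
proof -
  obtain a b where ab: "\<And>t. t \<in> {0..1} \<Longrightarrow> a + t *\<^sub>R (b - a) \<in> e"
    and "eint e f = dist a b * integral {0..1} (\<lambda>t. f (a + t *\<^sub>R (b - a)))"
    using eint_eq_integral_segment[OF assms(1)] by blast
  moreover have "integral {0..1} (\<lambda>t. f (a + t *\<^sub>R (b - a))) = integral {0..1} (\<lambda>t::real. 0::real)"
  proof (rule Henstock_Kurzweil_Integration.integral_cong)
    show "f (a + t *\<^sub>R (b - a)) = 0" if "t \<in> {0..1}" for t using ab[OF that] assms(2) by blast
  qed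
  ultimately show ?thesis by simp
qed

lemma eint_nonneg:
  assumes "e \<in> EB \<Omega> M" and "\<And>x. x \<in> e \<Longrightarrow> 0 \<le> f x"
  shows "0 \<le> eint e f"
proof -
  obtain a b where ab: "\<And>t. t \<in> {0..1} \<Longrightarrow> a + t *\<^sub>R (b - a) \<in> e"
    and "eint e f = dist a b * integral {0..1} (\<lambda>t. f (a + t *\<^sub>R (b - a)))"
    using eint_eq_integral_segment[OF assms(1)] by blast
  moreover have "0 \<le> integral {0..1} (\<lambda>t. f (a + t *\<^sub>R (b - a)))"
    using ab assms(2) by (intro integral_nonneg_unconditional) blast
  ultimately show ?thesis by simp
qed

lemma EB_diameter_nonneg: "e \<in> EB \<Omega> M \<Longrightarrow> 0 \<le> diameter e"
  by (metis EB_closed_segment bounded_closed_segment diameter_ge_0)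

lemma L2n_nonneg: "0 \<le> L2n \<Omega> M q"
  unfolding L2n_def by (intro real_sqrt_ge_zero integral_nonneg_unconditional) simp

lemma gradL2_nonneg: "0 \<le> gradL2 \<Omega> M v"
  unfolding gradL2_def grad_sq_def
  by (intro real_sqrt_ge_zero integral_nonneg_unconditional sum_nonneg) simp

lemma mnorm_nonneg: "0 \<le> mnorm \<Omega> M \<mu>"
  unfolding mnorm_def
  by (intro real_sqrt_ge_zero sum_nonneg mult_nonneg_nonneg eint_nonneg) (auto simp: EB_diameter_nonneg)

lemma gradL2_le_norm1h: "gradL2 \<Omega> M v \<le> norm1h \<Omega> M v"
proof -
  have "0 \<le> (\<Sum>e\<in>EB \<Omega> M. (1 / diameter e) * eint e (\<lambda>x. (norm (tr \<Omega> M v e x))^2))"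
    by (intro sum_nonneg mult_nonneg_nonneg eint_nonneg) (auto simp: EB_diameter_nonneg)
  then have "sqrt ((gradL2 \<Omega> M v)^2) \<le> norm1h \<Omega> M v"
    unfolding norm1h_def by (intro real_sqrt_le_mono) simp
  then show ?thesis using gradL2_nonneg[of \<Omega> M v] by simp
qed

lemma V0h_norm1h_eq_gradL2:
  assumes "v \<in> V0h \<Omega> M"
  shows "norm1h \<Omega> M v = gradL2 \<Omega> M v"
proof -
  have "(\<Sum>e\<in>EB \<Omega> M. (1 / diameter e) * eint e (\<lambda>x. (norm (tr \<Omega> M v e x))^2)) = 0"
    using assms unfolding V0h_def by (intro sum.neutral ballI) (simp add: eint_eq_0)
  then show ?thesis unfolding norm1h_def using gradL2_nonneg[of \<Omega> M v] by simp
qed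

lemma V0h_bnd_pair_eq_0:
  assumes "v \<in> V0h \<Omega> M"
  shows "bnd_pair \<Omega> M v \<mu> = 0"
  using assms unfolding V0h_def bnd_pair_def by (intro sum.neutral ballI) (simp add: eint_eq_0)

lemma divg_sq_le_grad_sq: "(divg v x)^2 \<le> 2 * grad_sq v x"
proof -
  let ?a = "pdiff v x 1 $ 1" and ?b = "pdiff v x 2 $ 2"
  have "(?a + ?b)^2 \<le> 2 * (?a^2 + ?b^2)"
    using sum_squares_bound[of ?a ?b] by (simp add: power2_eq_square algebra_simps)
  also have "\<dots> \<le> 2 * ((norm (pdiff v x 1))^2 + (norm (pdiff v x 2))^2)"
    by (intro mult_left_mono add_mono)
      (simp_all add: abs_le_square_iff[symmetric] component_le_norm_cart)
  finally show ?thesis unfolding divg_def grad_sq_def sum_2 .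
qed

lemma divg_pairing_bound:
  assumes "finite M" and "\<forall>T\<in>M. is_tri T" and v: "v \<in> Vh \<Omega> M" and q: "q \<in> Q0h \<Omega> M"
  shows "\<bar>integral (Omh \<Omega> M) (\<lambda>x. divg v x * q x)\<bar> \<le> sqrt 2 * L2n \<Omega> M q * norm1h \<Omega> M v"
proof -
  let ?O = "Omh \<Omega> M"
  note integrable = CT_piecewise_continuous_integrable_on[OF assms(1,2)]
  note divg = Vh_divg_CT_piecewise_continuous[OF v] and q' = Q0h_CT_piecewise_continuous[OF q]
  have div_sq: "(\<lambda>x. (divg v x)^2) integrable_on ?O"
    using integrable[OF CT_piecewise_continuous_mult[OF divg divg]] by (simp add: power2_eq_square)
  have q_sq: "(\<lambda>x. (q x)^2) integrable_on ?O"
    using integrable[OF CT_piecewise_continuous_mult[OF q' q']] by (simp add: power2_eq_square)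
  have div_q: "(\<lambda>x. divg v x * q x) integrable_on ?O"
    by (rule integrable[OF CT_piecewise_continuous_mult[OF divg q']])
  have grad: "grad_sq v integrable_on ?O"
    by (rule integrable[OF Vh_grad_sq_CT_piecewise_continuous[OF v]])
  have "integral ?O (\<lambda>x. (divg v x)^2) \<le> integral ?O (\<lambda>x. 2 * grad_sq v x)"
    using div_sq integrable_on_cmult_left[OF grad, of 2] divg_sq_le_grad_sq
    by (intro integral_le) auto
  also have "\<dots> = 2 * (gradL2 \<Omega> M v)^2"
    unfolding gradL2_def grad_sq_def
    by (simp add: integral_nonneg_unconditional sum_nonneg)
  finally have "sqrt (integral ?O (\<lambda>x. (divg v x)^2)) \<le> sqrt 2 * gradL2 \<Omega> M v"
    using gradL2_nonneg[of \<Omega> M v] real_sqrt_le_mono by (fastforce simp: real_sqrt_mult)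
  also have "\<dots> \<le> sqrt 2 * norm1h \<Omega> M v"
    using gradL2_le_norm1h[of \<Omega> M v] by simp
  finally have div_norm: "sqrt (integral ?O (\<lambda>x. (divg v x)^2)) \<le> sqrt 2 * norm1h \<Omega> M v" .
  have "\<bar>integral ?O (\<lambda>x. divg v x * q x)\<bar>
          \<le> sqrt (integral ?O (\<lambda>x. (divg v x)^2)) * L2n \<Omega> M q"
    unfolding L2n_def by (rule integral_Cauchy_Schwarz[OF div_sq q_sq div_q])
  also have "\<dots> \<le> sqrt 2 * norm1h \<Omega> M v * L2n \<Omega> M q"
    using div_norm L2n_nonneg by (rule mult_right_mono)
  finally show ?thesis by (simp add: mult_ac)
qed

section \<open>The inf-sup condition for \<open>b\<^sub>h\<close>\<close>

lemma Q0h_uminus: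
  assumes "q \<in> Q0h \<Omega> M"
  shows "(\<lambda>x. - q x) \<in> Q0h \<Omega> M"
proof -
  have "P1 (\<lambda>x. - p x)" if "P1 p" for p
  proof -
    obtain a b c where "\<forall>x. p x = a + b * x$1 + c * x$2" using \<open>P1 p\<close> unfolding P1_def by blast
    then show ?thesis unfolding P1_def
      by (intro exI[of _ "-a"] exI[of _ "-b"] exI[of _ "-c"]) simp
  qed
  then show ?thesis
    using assms unfolding Q0h_def by (fastforce simp: integral_neg)
qed

lemma infsup1_imp_bh_lower_bound:
  assumes "infsup1 \<Omega> M \<beta>1" and q: "q \<in> Q0h \<Omega> M"
  shows "ereal (\<beta>1 * L2n \<Omega> M q)
           \<le> (SUP v\<in>Vh \<Omega> M - {\<lambda>_. 0}. ereal (bh \<Omega> M v q \<mu> / norm1h \<Omega> M v))"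
proof -
  have "ereal (\<beta>1 * L2n \<Omega> M q) = ereal (\<beta>1 * L2n \<Omega> M (\<lambda>x. - q x))"
    unfolding L2n_def by simp
  also have "\<dots> \<le> (SUP v\<in>V0h \<Omega> M - {\<lambda>_. 0}.
              ereal (integral (Omh \<Omega> M) (\<lambda>x. divg v x * - q x) / gradL2 \<Omega> M v))"
    using assms(1) Q0h_uminus[OF q] unfolding infsup1_def by (rule bspec)
  also have "\<dots> = (SUP v\<in>V0h \<Omega> M - {\<lambda>_. 0}. ereal (bh \<Omega> M v q \<mu> / norm1h \<Omega> M v))"
    unfolding bh_def
    by (intro SUP_cong) (simp_all add: integral_neg V0h_norm1h_eq_gradL2 V0h_bnd_pair_eq_0)
  also have "\<dots> \<le> (SUP v\<in>Vh \<Omega> M - {\<lambda>_. 0}. ereal (bh \<Omega> M v q \<mu> / norm1h \<Omega> M v))"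
    by (rule SUP_subset_mono) (auto simp: V0h_def)
  finally show ?thesis .
qed

lemma infsup2_imp_bh_lower_bound:
  assumes "finite M" and "\<forall>T\<in>M. is_tri T" and "infsup2 \<Omega> M \<beta>2"
    and q: "q \<in> Q0h \<Omega> M" and \<mu>: "\<mu> \<in> X0h \<Omega> M"
  shows "ereal (\<beta>2 * mnorm \<Omega> M \<mu>)
           \<le> (SUP v\<in>Vh \<Omega> M - {\<lambda>_. 0}. ereal (bh \<Omega> M v q \<mu> / norm1h \<Omega> M v))
              + ereal (sqrt 2 * L2n \<Omega> M q)"
    (is "_ \<le> ?S + ereal ?c")
proof -
  have "ereal (bnd_pair \<Omega> M v \<mu> / norm1h \<Omega> M v) \<le> ?S + ereal ?c"
    if v: "v \<in> Vh \<Omega> M - {\<lambda>_. 0}" for v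
  proof -
    let ?N = "norm1h \<Omega> M v"
    have "0 \<le> ?N" using gradL2_nonneg gradL2_le_norm1h order_trans by blast
    have "bnd_pair \<Omega> M v \<mu> / ?N \<le> bh \<Omega> M v q \<mu> / ?N + ?c"
      \<comment> \<open>if \<open>?N = 0\<close>, both quotients are \<open>0\<close> since \<open>x / 0 = 0\<close>\<close>
    proof (cases "?N = 0")
      case False
      have "bnd_pair \<Omega> M v \<mu> \<le> bh \<Omega> M v q \<mu> + ?c * ?N"
        using divg_pairing_bound[OF assms(1,2) _ q, of v] v unfolding bh_def by auto
      then show ?thesis using False \<open>0 \<le> ?N\<close> by (simp add: field_simps)
    qed (simp add: L2n_nonneg)
    then have "ereal (bnd_pair \<Omega> M v \<mu> / ?N) \<le> ereal (bh \<Omega> M v q \<mu> / ?N) + ereal ?c"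
      by simp
    also have "\<dots> \<le> ?S + ereal ?c"
      using v by (intro add_right_mono SUP_upper)
    finally show ?thesis .
  qed
  then have "(SUP v\<in>Vh \<Omega> M - {\<lambda>_. 0}. ereal (bnd_pair \<Omega> M v \<mu> / norm1h \<Omega> M v)) \<le> ?S + ereal ?c"
    by (rule SUP_least)
  then show ?thesis using assms(3) \<mu> unfolding infsup2_def by (meson order_trans)
qed

text \<open>With \<open>\<theta> = \<beta>\<^sub>1 / (2 (\<beta>\<^sub>1 + C))\<close>, the convex combination
  \<open>s = \<theta> s + (1 - \<theta>) s \<ge> \<theta> (\<beta>\<^sub>2 b - C a) + (1 - \<theta>) \<beta>\<^sub>1 a = \<theta> \<beta>\<^sub>2 b + \<beta>\<^sub>1 a / 2\<close>
  absorbs the loss \<open>C a\<close> in the second bound.\<close>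
lemma combine_lower_bounds:
  fixes a b s \<beta>1 \<beta>2 C :: real
  assumes "0 \<le> a" "0 \<le> b" "0 < \<beta>1" "0 \<le> C"
    and s1: "\<beta>1 * a \<le> s" and s2: "\<beta>2 * b \<le> s + C * a"
  shows "min (\<beta>1 / 2) (\<beta>1 * \<beta>2 / (2 * (\<beta>1 + C))) * (a + b) \<le> s"
proof -
  define \<theta> where "\<theta> = \<beta>1 / (2 * (\<beta>1 + C))"
  have "0 \<le> \<theta>" "\<theta> \<le> 1" and key: "\<theta> * (\<beta>1 + C) = \<beta>1 / 2"
    using assms(3,4) unfolding \<theta>_def by (auto simp: field_simps)
  let ?\<beta> = "min (\<beta>1 / 2) (\<beta>1 * \<beta>2 / (2 * (\<beta>1 + C)))"
  have "\<theta> * \<beta>2 = \<beta>1 * \<beta>2 / (2 * (\<beta>1 + C))" unfolding \<theta>_def by simp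
  then have "?\<beta> \<le> \<beta>1 / 2" "?\<beta> \<le> \<theta> * \<beta>2"
    by (simp_all only: min.cobounded1 min.cobounded2)
  then have "?\<beta> * (a + b) \<le> \<beta>1 / 2 * a + \<theta> * \<beta>2 * b"
    using assms(1,2) unfolding distrib_left by (intro add_mono mult_right_mono)
  also have "\<dots> = \<theta> * \<beta>2 * b + \<beta>1 * a - \<theta> * (\<beta>1 + C) * a"
    unfolding key by simp
  also have "\<dots> = \<theta> * (\<beta>2 * b - C * a) + (1 - \<theta>) * (\<beta>1 * a)"
    by (simp add: algebra_simps)
  also have "\<dots> \<le> \<theta> * s + (1 - \<theta>) * s"
    using s1 s2 \<open>0 \<le> \<theta>\<close> \<open>\<theta> \<le> 1\<close> by (intro add_mono mult_left_mono) auto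
  finally show ?thesis by (simp add: algebra_simps)
qed

lemma infsup_bh_if_infsup1_infsup2:
  assumes "finite M" and "\<forall>T\<in>M. is_tri T" and "0 < \<beta>1"
    and "infsup1 \<Omega> M \<beta>1" and "infsup2 \<Omega> M \<beta>2"
  shows "infsup_bh \<Omega> M (min (\<beta>1 / 2) (\<beta>1 * \<beta>2 / (2 * (\<beta>1 + sqrt 2))))"
  unfolding infsup_bh_def
proof (intro ballI)
  fix q \<mu> assume q: "q \<in> Q0h \<Omega> M" and \<mu>: "\<mu> \<in> X0h \<Omega> M"
  let ?S = "SUP v\<in>Vh \<Omega> M - {\<lambda>_. 0}. ereal (bh \<Omega> M v q \<mu> / norm1h \<Omega> M v)"
  have s1: "ereal (\<beta>1 * L2n \<Omega> M q) \<le> ?S"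
    using assms(4) q by (rule infsup1_imp_bh_lower_bound)
  have s2: "ereal (\<beta>2 * mnorm \<Omega> M \<mu>) \<le> ?S + ereal (sqrt 2 * L2n \<Omega> M q)"
    using assms(1,2,5) q \<mu> by (rule infsup2_imp_bh_lower_bound)
  show "ereal (min (\<beta>1 / 2) (\<beta>1 * \<beta>2 / (2 * (\<beta>1 + sqrt 2))) * (L2n \<Omega> M q + mnorm \<Omega> M \<mu>))
          \<le> ?S"
  proof (cases ?S)
    case (real s)
    then show ?thesis
      using combine_lower_bounds[OF L2n_nonneg mnorm_nonneg assms(3), where C = "sqrt 2" and s = s] s1 s2
      by simp
  qed (use s1 in simp_all)
qed

theorem theorem4p8:
  fixes \<beta>1 \<beta>2 :: real
  assumes "\<beta>1 > 0" and "\<beta>2 > 0"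
  shows "\<exists>\<beta>>0. \<forall>(\<Omega>::pt set) (S::pt set) (H::real set) (Sh::real \<Rightarrow> pt set set) (h0::real).
           admissible_family \<Omega> S H Sh \<and> h0 > 0 \<and>
           (\<forall>h\<in>H. h \<le> h0 \<longrightarrow> infsup1 \<Omega> (Sh h) \<beta>1) \<and>
           (\<forall>h\<in>H. h \<le> h0 \<longrightarrow> infsup2 \<Omega> (Sh h) \<beta>2)
           \<longrightarrow> (\<forall>h\<in>H. h \<le> h0 \<longrightarrow> infsup_bh \<Omega> (Sh h) \<beta>)"
proof (intro exI[of _ "min (\<beta>1 / 2) (\<beta>1 * \<beta>2 / (2 * (\<beta>1 + sqrt 2)))"] conjI allI impI ballI)
  show "0 < min (\<beta>1 / 2) (\<beta>1 * \<beta>2 / (2 * (\<beta>1 + sqrt 2)))"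
    using assms by (simp add: add_pos_pos)
  fix \<Omega> S H Sh h0 h
  assume hyps: "admissible_family \<Omega> S H Sh \<and> h0 > 0 \<and>
           (\<forall>h\<in>H. h \<le> h0 \<longrightarrow> infsup1 \<Omega> (Sh h) \<beta>1) \<and>
           (\<forall>h\<in>H. h \<le> h0 \<longrightarrow> infsup2 \<Omega> (Sh h) \<beta>2)"
    and h: "h \<in> H" "h \<le> h0"
  then have "triangulation_of (Sh h) S" unfolding admissible_family_def by blast
  then have "finite (Sh h)" "\<forall>T\<in>Sh h. is_tri T" unfolding triangulation_of_def by auto
  then show "infsup_bh \<Omega> (Sh h) (min (\<beta>1 / 2) (\<beta>1 * \<beta>2 / (2 * (\<beta>1 + sqrt 2))))"
    using hyps h assms(1) by (intro infsup_bh_if_infsup1_infsup2) auto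
qed

end
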